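(* Let $\ell,n$ be positive integers with $2^\ell\le n$. If $A\subseteq\mathbb{Z}_{2^n}$ has size $|A|>\left(1-\frac{1}{2^\ell-1}\right)2^n$, then there exists $x\in\mathbb{Z}_{2^n}$ such that $\{x,2x,3x,\dots,(2^\ell-1)x\}\subseteq A$.
   Context: Arithmetic is in $\mathbb{Z}_{2^n}$. *)

theory Defs
  imports Complex_Main
begin

end

(* If A contains no set {x, 2x, ..., m x} with m = 2^l - 1, its complement B meets every such
   set, and we show m |B| >= 2^n.  For odd x, B contains k x for some k = 2^j c with c odd and
   j < l.  Multiplication by c permutes the odd residues, and u |-> 2^j u maps them 2^j-to-1
   onto the residues of 2-adic valuation exactly j; summing over j and over the 2^(l-1-j) odd
   c < 2^(l-j) shows that at least 2^(n-l) elements of B are not divisible by 2^l.  The multiples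
   of 2^l form a copy of Z_{2^(n-l)} in which B again meets every such set, so induction on n
   gives m |B| >= m 2^(n-l) + 2^(n-l) = 2^n. *)

theory Submission
  imports Defs "HOL-Number_Theory.Cong"
begin

definition hits_all_multiples :: "nat \<Rightarrow> nat \<Rightarrow> nat set \<Rightarrow> bool" where
  "hits_all_multiples l n B \<longleftrightarrow>
    (\<forall>x < 2 ^ n. \<exists>k \<in> {1..2 ^ l - 1}. (k * x) mod 2 ^ n \<in> B)"

definition odd_residues :: "nat \<Rightarrow> nat set" where
  "odd_residues n = {u. u < 2 ^ n \<and> odd u}"

definition exact_pow2_multiples :: "nat \<Rightarrow> nat set" where
  "exact_pow2_multiples j = {y. 2 ^ j dvd y \<and> \<not> 2 ^ Suc j dvd y}"

lemma finite_odd_residues [simp]: "finite (odd_residues n)"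
  by (simp add: odd_residues_def)

lemma card_odd_residues:
  assumes "0 < n"
  shows "card (odd_residues n) = 2 ^ (n - 1)"
proof -
  have pow: "(2::nat) ^ n = 2 * 2 ^ (n - 1)"
    using assms by (simp add: power_eq_if)
  have "odd_residues n = (\<lambda>i. 2 * i + 1) ` {..<2 ^ (n - 1)}"
  proof (intro set_eqI iffI)
    fix u assume "u \<in> odd_residues n"
    then have "odd u" "u < 2 * 2 ^ (n - 1)"
      by (simp_all add: odd_residues_def pow)
    then have "u = 2 * (u div 2) + 1" "u div 2 < 2 ^ (n - 1)"
      by auto
    then show "u \<in> (\<lambda>i. 2 * i + 1) ` {..<2 ^ (n - 1)}"
      by (metis imageI lessThan_iff)
  qed (auto simp: odd_residues_def pow)
  moreover have "inj_on (\<lambda>i::nat. 2 * i + 1) {..<2 ^ (n - 1)}"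
    by (simp add: inj_on_def)
  ultimately show ?thesis
    by (simp add: card_image)
qed

lemma card_odd_residues_mult_odd_le:
  assumes "odd c"
  shows "card {u \<in> odd_residues n. (a * c * u) mod 2 ^ n \<in> B}
       \<le> card {u \<in> odd_residues n. (a * u) mod 2 ^ n \<in> B}"
proof (rule card_inj_on_le[where f = "\<lambda>u. (c * u) mod 2 ^ n"])
  have "coprime c (2 ^ n)"
    using assms by simp
  then show "inj_on (\<lambda>u. (c * u) mod 2 ^ n) {u \<in> odd_residues n. (a * c * u) mod 2 ^ n \<in> B}"
    by (intro inj_onI)
      (auto simp: odd_residues_def cong_def [symmetric] cong_mult_lcancel_nat
        cong_less_modulus_unique_nat)
  show "(\<lambda>u. (c * u) mod 2 ^ n) ` {u \<in> odd_residues n. (a * c * u) mod 2 ^ n \<in> B}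
      \<subseteq> {u \<in> odd_residues n. (a * u) mod 2 ^ n \<in> B}"
  proof (rule image_subsetI)
    fix u assume "u \<in> {u \<in> odd_residues n. (a * c * u) mod 2 ^ n \<in> B}"
    then have u: "u \<in> odd_residues n" "(a * c * u) mod 2 ^ n \<in> B"
      by simp_all
    then have "0 < n"
      by (auto simp: odd_residues_def intro: Nat.gr0I)
    moreover have "odd (c * u)"
      using assms u(1) by (auto simp: odd_residues_def)
    ultimately have "odd ((c * u) mod 2 ^ n)"
      by (simp add: dvd_mod_iff)
    moreover have "(a * ((c * u) mod 2 ^ n)) mod 2 ^ n = (a * c * u) mod 2 ^ n"
      by (metis mod_mult_right_eq mult.assoc)
    ultimately show "(c * u) mod 2 ^ n \<in> {u \<in> odd_residues n. (a * u) mod 2 ^ n \<in> B}"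
      using u(2) by (simp add: odd_residues_def)
  qed
qed simp

lemma card_odd_residues_mult_pow2_le:
  assumes "j < n" and "finite B"
  shows "card {u \<in> odd_residues n. (2 ^ j * u) mod 2 ^ n \<in> B}
       \<le> 2 ^ j * card (B \<inter> exact_pow2_multiples j)"
proof -
  define M :: nat where "M = 2 ^ (n - j)"
  have pow: "(2::nat) ^ n = 2 ^ j * M"
    using assms(1) by (simp add: M_def flip: power_add)
  have "card {u \<in> odd_residues n. (2 ^ j * u) mod 2 ^ n \<in> B}
      \<le> card ({..<(2::nat) ^ j} \<times> (B \<inter> exact_pow2_multiples j))"
  proof (rule card_inj_on_le[where f = "\<lambda>u. (u div M, 2 ^ j * (u mod M))"])
    show "inj_on (\<lambda>u. (u div M, 2 ^ j * (u mod M))) {u \<in> odd_residues n. (2 ^ j * u) mod 2 ^ n \<in> B}"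
      by (intro inj_onI)
        (metis div_mult_mod_eq mult_cancel1 power_not_zero prod.inject zero_neq_numeral)
    show "(\<lambda>u. (u div M, 2 ^ j * (u mod M))) ` {u \<in> odd_residues n. (2 ^ j * u) mod 2 ^ n \<in> B}
        \<subseteq> {..<2 ^ j} \<times> (B \<inter> exact_pow2_multiples j)"
    proof (rule image_subsetI)
      fix u assume "u \<in> {u \<in> odd_residues n. (2 ^ j * u) mod 2 ^ n \<in> B}"
      then have u: "u < 2 ^ j * M" "odd u" "2 ^ j * (u mod M) \<in> B"
        by (simp_all add: odd_residues_def pow mod_mult_mult1)
      have "u div M < 2 ^ j"
        using u(1) by (simp add: div_less_iff_less_mult mult.commute M_def)
      moreover have "odd (u mod M)"
        using u(2) assms(1) by (simp add: M_def dvd_mod_iff)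
      ultimately show "(u div M, 2 ^ j * (u mod M)) \<in> {..<2 ^ j} \<times> (B \<inter> exact_pow2_multiples j)"
        using u(3) by (simp add: exact_pow2_multiples_def)
    qed
  qed (use assms(2) in simp)
  then show ?thesis
    by (simp add: card_cartesian_product)
qed

lemma obtain_pow2_times_odd_residue:
  fixes k :: nat
  assumes "0 < k" and "k < 2 ^ l"
  obtains j c where "j < l" and "c \<in> odd_residues (l - j)" and "k = 2 ^ j * c"
proof -
  define j where "j = multiplicity 2 k"
  obtain c where k: "k = 2 ^ j * c" and "odd c"
    using multiplicity_decompose'[of k 2] assms(1) unfolding j_def by auto
  then have "2 ^ j \<le> k"
    using assms(1) by (simp add: Suc_leI)
  then have "(2::nat) ^ j < 2 ^ l"
    using assms(2) by linarith
  then have "j < l"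
    by simp
  then have "(2::nat) ^ l = 2 ^ j * 2 ^ (l - j)"
    by (simp flip: power_add)
  then have "c < 2 ^ (l - j)"
    using k assms(2) by simp
  with \<open>j < l\<close> \<open>odd c\<close> k show ?thesis
    using that by (simp add: odd_residues_def)
qed

lemma sum_card_exact_pow2_multiples_le:
  assumes "finite B"
  shows "(\<Sum>j<l. card (B \<inter> exact_pow2_multiples j)) \<le> card {y \<in> B. \<not> 2 ^ l dvd y}"
proof -
  have disjoint: "exact_pow2_multiples i \<inter> exact_pow2_multiples j = {}" if "i < j" for i j
    using that le_imp_power_dvd[of "Suc i" j "2::nat"] dvd_trans
    by (auto simp: exact_pow2_multiples_def)
  have "(\<Sum>j<l. card (B \<inter> exact_pow2_multiples j)) = card (\<Union>j<l. B \<inter> exact_pow2_multiples j)"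
    using assms disjoint
    by (intro card_UN_disjoint [symmetric]) (auto, metis linorder_neqE_nat disjoint_iff)
  also have "\<dots> \<le> card {y \<in> B. \<not> 2 ^ l dvd y}"
  proof (intro card_mono)
    have "\<not> 2 ^ l dvd y" if "y \<in> exact_pow2_multiples j" "j < l" for y j
      using that le_imp_power_dvd[of "Suc j" l "2::nat"] dvd_trans
      by (auto simp: exact_pow2_multiples_def Suc_le_eq)
    then show "(\<Union>j<l. B \<inter> exact_pow2_multiples j) \<subseteq> {y \<in> B. \<not> 2 ^ l dvd y}"
      by blast
  qed (use assms in simp)
  finally show ?thesis .
qed

lemma hits_all_multiples_card_not_dvd:
  assumes hits: "hits_all_multiples l n B" and "finite B" and "0 < l" and "l \<le> n"
  shows "2 ^ (n - l) \<le> card {y \<in> B. \<not> 2 ^ l dvd y}"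
proof -
  define F where "F j c = {u \<in> odd_residues n. (2 ^ j * c * u) mod 2 ^ n \<in> B}" for j c :: nat
  define e where "e j = card (B \<inter> exact_pow2_multiples j)" for j
  have cover: "odd_residues n \<subseteq> (\<Union>j<l. \<Union>c \<in> odd_residues (l - j). F j c)"
  proof
    fix u assume u: "u \<in> odd_residues n"
    then obtain k where k: "k \<in> {1..2 ^ l - 1}" "(k * u) mod 2 ^ n \<in> B"
      using hits by (auto simp: hits_all_multiples_def odd_residues_def)
    then have "0 < k" "k < 2 ^ l"
      by auto
    then obtain j c where "j < l" "c \<in> odd_residues (l - j)" "k = 2 ^ j * c"
      by (rule obtain_pow2_times_odd_residue)
    with u k(2) show "u \<in> (\<Union>j<l. \<Union>c \<in> odd_residues (l - j). F j c)"
      by (auto simp: F_def)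
  qed
  have card_F: "card (F j c) \<le> 2 ^ j * e j" if "j < l" "c \<in> odd_residues (l - j)" for j c
  proof -
    have "card (F j c) \<le> card {u \<in> odd_residues n. (2 ^ j * u) mod 2 ^ n \<in> B}"
      using that(2) card_odd_residues_mult_odd_le by (simp add: F_def odd_residues_def)
    also have "\<dots> \<le> 2 ^ j * e j"
      using that(1) assms(2,4) card_odd_residues_mult_pow2_le by (simp add: e_def)
    finally show ?thesis .
  qed
  have "2 ^ (l - 1) * 2 ^ (n - l) = card (odd_residues n)"
    using assms(3,4) by (simp add: card_odd_residues flip: power_add)
  also have "\<dots> \<le> card (\<Union>j<l. \<Union>c \<in> odd_residues (l - j). F j c)"
    using cover by (intro card_mono) (auto simp: F_def)
  also have "\<dots> \<le> (\<Sum>j<l. \<Sum>c \<in> odd_residues (l - j). card (F j c))"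
    by (intro order.trans[OF card_UN_le] sum_mono card_UN_le) auto
  also have "\<dots> \<le> (\<Sum>j<l. \<Sum>c \<in> odd_residues (l - j). 2 ^ j * e j)"
    using card_F by (intro sum_mono) auto
  also have "\<dots> = (\<Sum>j<l. 2 ^ (l - 1) * e j)"
  proof (rule sum.cong)
    fix j assume "j \<in> {..<l}"
    then have "2 ^ (l - j - 1) * 2 ^ j = (2::nat) ^ (l - 1)"
      by (simp flip: power_add)
    with \<open>j \<in> {..<l}\<close> show "(\<Sum>c \<in> odd_residues (l - j). 2 ^ j * e j) = 2 ^ (l - 1) * e j"
      by (simp add: card_odd_residues)
  qed simp
  also have "\<dots> \<le> 2 ^ (l - 1) * card {y \<in> B. \<not> 2 ^ l dvd y}"
    using sum_card_exact_pow2_multiples_le [OF assms(2)]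
    by (simp add: e_def flip: sum_distrib_left)
  finally show ?thesis
    by simp
qed

lemma hits_all_multiples_vimage_mult_pow2:
  assumes hits: "hits_all_multiples l n B" and "l \<le> n"
  shows "hits_all_multiples l (n - l) ((*) (2 ^ l) -` B)"
  unfolding hits_all_multiples_def
proof (intro allI impI)
  fix x :: nat assume "x < 2 ^ (n - l)"
  have pow: "(2::nat) ^ n = 2 ^ l * 2 ^ (n - l)"
    using assms(2) by (simp flip: power_add)
  with \<open>x < 2 ^ (n - l)\<close> have "2 ^ l * x < 2 ^ n"
    by simp
  then obtain k where "k \<in> {1..2 ^ l - 1}" "(k * (2 ^ l * x)) mod 2 ^ n \<in> B"
    using hits by (auto simp: hits_all_multiples_def)
  moreover have "(k * (2 ^ l * x)) mod 2 ^ n = 2 ^ l * ((k * x) mod 2 ^ (n - l))"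
    by (simp add: pow mult.left_commute mod_mult_mult1)
  ultimately show "\<exists>k \<in> {1..2 ^ l - 1}. (k * x) mod 2 ^ (n - l) \<in> (*) (2 ^ l) -` B"
    by auto
qed

lemma hits_all_multiples_card_ge:
  assumes "hits_all_multiples l n B" and "finite B" and "0 < l"
  shows "2 ^ n \<le> (2 ^ l - 1) * card B"
  using assms(1,2)
proof (induction n arbitrary: B rule: less_induct)
  case (less n B)
  show ?case
  proof (cases "n < l")
    case True
    have "0 \<in> B"
      using less.prems(1) unfolding hits_all_multiples_def
      by (metis mod_0 mult_0_right pos2 zero_less_power)
    with less.prems(2) have "1 \<le> card B"
      by (auto simp: Suc_le_eq card_gt_0_iff)
    moreover have "(2::nat) ^ n < 2 ^ l"
      using True by simp
    ultimately show ?thesis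
      using mult_le_mono2[of 1 "card B" "2 ^ l - 1"] by linarith
  next
    case False
    define B' where "B' = (*) (2 ^ l) -` B"
    have "hits_all_multiples l (n - l) B'"
      using less.prems(1) False by (simp add: B'_def hits_all_multiples_vimage_mult_pow2)
    moreover have "finite B'"
      using less.prems(2) by (simp add: B'_def finite_vimageI inj_on_def)
    ultimately have IH: "2 ^ (n - l) \<le> (2 ^ l - 1) * card B'"
      using less.IH[of "n - l"] False assms(3) by simp
    have "card B' = card {y \<in> B. 2 ^ l dvd y}"
    proof -
      have "(*) (2 ^ l) ` B' = {y \<in> B. 2 ^ l dvd y}"
        by (auto simp: B'_def)
      moreover have "inj_on ((*) ((2::nat) ^ l)) B'"
        by (simp add: inj_on_def)
      ultimately show ?thesis
        using card_image by fastforce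
    qed
    moreover have "card B = card {y \<in> B. \<not> 2 ^ l dvd y} + card {y \<in> B. 2 ^ l dvd y}"
      using less.prems(2)
      by (subst card_Un_disjoint [symmetric]) (auto intro: arg_cong [where f = card])
    moreover have "2 ^ (n - l) \<le> card {y \<in> B. \<not> 2 ^ l dvd y}"
      using less.prems False assms(3) by (simp add: hits_all_multiples_card_not_dvd)
    ultimately have "2 ^ (n - l) + card B' \<le> card B"
      by linarith
    then have "(2 ^ l - 1) * 2 ^ (n - l) + (2 ^ l - 1) * card B' \<le> (2 ^ l - 1) * card B"
      by (metis add_mult_distrib2 mult_le_mono2)
    moreover have "(2 ^ l - 1) * 2 ^ (n - l) + 2 ^ (n - l) = (2::nat) ^ n"
      using False by (simp add: algebra_simps flip: power_add)
    ultimately show ?thesis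
      using IH by linarith
  qed
qed

theorem claim2p2:
  fixes l n :: nat and A :: "nat set"
  assumes "0 < l" and "0 < n" and "2 ^ l \<le> n"
    and "A \<subseteq> {0..<2 ^ n}"
    and "real (card A) > (1 - 1 / (2 ^ l - 1)) * (2::real) ^ n"
  shows "\<exists>x \<in> {0..<2 ^ n}. \<forall>k \<in> {1..2 ^ l - 1}. (k * x) mod 2 ^ n \<in> A"
proof (rule ccontr)
  define m :: nat where "m = 2 ^ l - 1"
  define B where "B = {0..<2 ^ n} - A"
  have "(2::nat) ^ 1 \<le> 2 ^ l"
    using assms(1) by (intro power_increasing) auto
  then have "1 \<le> m" and real_m: "real m = 2 ^ l - 1"
    by (simp_all add: m_def)
  assume "\<not> ?thesis"
  then have "hits_all_multiples l n B"
    by (auto simp: hits_all_multiples_def B_def)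
  then have "2 ^ n \<le> m * card B"
    unfolding m_def
    by (rule hits_all_multiples_card_ge) (use assms(1) in \<open>simp_all add: B_def\<close>)
  moreover have "card B = 2 ^ n - card A" and "card A \<le> 2 ^ n"
    using assms(4) card_mono[OF _ assms(4)] by (auto simp: B_def card_Diff_subset finite_subset)
  ultimately have "(2::real) ^ n \<le> real m * (2 ^ n - real (card A))"
    by (metis of_nat_le_iff of_nat_mult of_nat_diff of_nat_numeral of_nat_power)
  moreover have "real m * ((1 - 1 / real m) * 2 ^ n) < real m * real (card A)"
    using assms(5) \<open>1 \<le> m\<close>
    by (intro mult_strict_left_mono) (simp_all add: real_m [symmetric])
  ultimately show False
    using \<open>1 \<le> m\<close> by (simp add: algebra_simps)
qed

end
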